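(* Let $n\ge 3$. For $1\le a,b\le n$ let $e^A_{a,b}=e_a e_b^T-e_b e_a^T\in\mathfrak{so}(n)$, where $e_1,\dots,e_n$ is the canonical basis of $\mathbf{R}^n$. For $2\le i<j\le n$ let $$E_{i,j}=\{C\in(\mathfrak{so}(n))^n:\ \rho(g^{\theta}_{i,j})(C)=C \text{ for all }\theta\in\mathbf{R}\}.$$ Then: (1) for $n=3$: $\bigcap_{2\le i<j\le n}E_{i,j}=E_{2,3}=\mathrm{span}\{e_2\otimes e^A_{2,1}+e_3\otimes e^A_{3,1},\ e_2\otimes e^A_{3,1}-e_3\otimes e^A_{2,1},\ e_1\otimes e^A_{2,3}\}$; (2) for $n=4$: $\bigcap_{2\le i<j\le n}E_{i,j}=\mathrm{span}\{e_2\otimes e^A_{2,1}+e_3\otimes e^A_{3,1}+e_4\otimes e^A_{4,1},\ e_2\otimes e^A_{3,4}-e_3\otimes e^A_{2,4}+e_4\otimes e^A_{2,3}\}$; (3) for $n\ge 5$: $\bigcap_{2\le i<j\le n}E_{i,j}=\mathrm{span}\{\sum_{k=1}^n e_k\otimes e^A_{k,1}\}$.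
   Context: $\mathfrak{so}(n)$ is the space of real antisymmetric $n\times n$ matrices. Elements of $(\mathfrak{so}(n))^n$ are $n$-tuples $C=(C_1,\dots,C_n)$; for $v\in\mathbf{R}^n$ and $M\in\mathfrak{so}(n)$, $v\otimes M$ denotes the tuple whose $\mu$-th entry is $v_\mu M$. The action $\rho$ of $SO(n)$ on $(\mathfrak{so}(n))^n$ is $\rho(g)(C)_\mu=\sum_{\nu=1}^n [g^{-1}]_{\nu,\mu}\, g\,C_\nu\, g^{-1}$. For $i<j$ and $\theta\in\mathbf{R}$, $g^\theta_{i,j}\in SO(n)$ is the rotation equal to the identity except for the entries $(i,i)=(j,j)=\cos\theta$, $(i,j)=-\sin\theta$, $(j,i)=\sin\theta$. *)

theory Defs
  imports Complex_Main
begin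

text \<open>Matrices are modelled as functions nat => nat => real, with indices 1..n
(entries outside {1..n} are zero).  An element C of (so(n))^n is modelled as
a function nat => nat => nat => real, where C mu is the mu-th matrix
(mu in 1..n) and C mu = 0 for mu outside 1..n.\<close>

type_synonym mat = "nat \<Rightarrow> nat \<Rightarrow> real"
type_synonym tup = "nat \<Rightarrow> nat \<Rightarrow> nat \<Rightarrow> real"

definition so :: "nat \<Rightarrow> mat set" where
  "so n = {M. (\<forall>i j. M i j = - M j i) \<and>
              (\<forall>i j. (i \<notin> {1..n} \<or> j \<notin> {1..n}) \<longrightarrow> M i j = 0)}"

definition soTuples :: "nat \<Rightarrow> tup set" where
  "soTuples n = {C. \<forall>\<mu>. (\<mu> \<in> {1..n} \<longrightarrow> C \<mu> \<in> so n) \<and> (\<mu> \<notin> {1..n} \<longrightarrow> C \<mu> = (\<lambda>_ _. 0))}"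

definition mmul :: "nat \<Rightarrow> mat \<Rightarrow> mat \<Rightarrow> mat" where
  "mmul n A B = (\<lambda>i j. \<Sum>k=1..n. A i k * B k j)"

definition mtrans :: "mat \<Rightarrow> mat" where
  "mtrans A = (\<lambda>i j. A j i)"

definition rot :: "nat \<Rightarrow> nat \<Rightarrow> nat \<Rightarrow> real \<Rightarrow> mat" where
  "rot n i j \<theta> = (\<lambda>a b.
     if a \<notin> {1..n} \<or> b \<notin> {1..n} then 0
     else if (a = i \<and> b = i) \<or> (a = j \<and> b = j) then cos \<theta>
     else if a = i \<and> b = j then - sin \<theta>
     else if a = j \<and> b = i then sin \<theta>
     else if a = b then 1 else 0)"

text \<open>The action rho(g)(C)_mu = sum_nu [g^{-1}]_{nu,mu} g C_nu g^{-1}, for g in SO(n),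
where g^{-1} is the transpose of g.\<close>
definition rho :: "nat \<Rightarrow> mat \<Rightarrow> tup \<Rightarrow> tup" where
  "rho n g C = (\<lambda>\<mu>. \<lambda>a b. if \<mu> \<notin> {1..n} then 0 else
      \<Sum>\<nu>=1..n. mtrans g \<nu> \<mu> * mmul n (mmul n g (C \<nu>)) (mtrans g) a b)"

definition Eset :: "nat \<Rightarrow> nat \<Rightarrow> nat \<Rightarrow> tup set" where
  "Eset n i j = {C \<in> soTuples n. \<forall>\<theta>::real. rho n (rot n i j \<theta>) C = C}"

definition evec :: "nat \<Rightarrow> nat \<Rightarrow> real" where
  "evec a = (\<lambda>i. if i = a then 1 else 0)"

definition eA :: "nat \<Rightarrow> nat \<Rightarrow> mat" where
  "eA a b = (\<lambda>i j. evec a i * evec b j - evec b i * evec a j)"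

definition tens :: "(nat \<Rightarrow> real) \<Rightarrow> mat \<Rightarrow> tup" where
  "tens v M = (\<lambda>\<mu> a b. v \<mu> * M a b)"

definition tadd :: "tup \<Rightarrow> tup \<Rightarrow> tup" (infixl "\<oplus>" 65) where
  "tadd C D = (\<lambda>\<mu> a b. C \<mu> a b + D \<mu> a b)"

definition tsub :: "tup \<Rightarrow> tup \<Rightarrow> tup" (infixl "\<ominus>" 65) where
  "tsub C D = (\<lambda>\<mu> a b. C \<mu> a b - D \<mu> a b)"

definition tspan :: "tup set \<Rightarrow> tup set" where
  "tspan S = {v. \<exists>F c. finite F \<and> F \<subseteq> S \<and>
                   v = (\<lambda>\<mu> a b. \<Sum>x\<in>F. c x * x \<mu> a b)}"

definition Eint :: "nat \<Rightarrow> tup set" where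
  "Eint n = \<Inter> {Eset n i j | i j. 2 \<le> i \<and> i < j \<and> j \<le> n}"

end

theory Submission
  imports Defs
begin

text \<open>
  The action \<open>\<rho>(g)\<close> applies \<open>g\<close> to each of the three indices of the tensor \<open>C\<^sub>\<mu>\<^sub>a\<^sub>b\<close>, and the
  rotations \<open>g\<^sup>\<theta>\<^sub>i\<^sub>,\<^sub>j\<close> with \<open>2 \<le> i < j\<close> all fix \<open>e\<^sub>1\<close>. The half turn in the
  \<open>(p,q)\<close>-plane changes the sign of every entry in which \<open>p\<close> and \<open>q\<close> occur an odd number of times
  altogether, so such entries vanish. If some index \<open>q \<ge> 2\<close> does not occur in \<open>(\<mu>,a,b)\<close>, this
  leaves only the entries \<open>C\<^sub>m\<^sub>m\<^sub>1 = -C\<^sub>m\<^sub>1\<^sub>m\<close> with \<open>m \<ge> 2\<close>, which quarter turns identify with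
  \<open>C\<^sub>2\<^sub>2\<^sub>1\<close>; for \<open>n \<ge> 5\<close> there always is such a \<open>q\<close>. For \<open>n = 4\<close> and \<open>n = 3\<close> the remaining
  entries, whose indices contain all of \<open>2..n\<close>, are again tied together by quarter turns and
  antisymmetry and yield the additional invariants. Conversely, \<open>\<Sum>\<^sub>k e\<^sub>k \<otimes> e\<^sup>A\<^sub>k\<^sub>,\<^sub>1\<close> is invariant
  because \<open>g\<close> fixes \<open>e\<^sub>1\<close> and is orthogonal, and the other generators are checked directly.
\<close>

section \<open>Rotations in coordinates\<close>

text \<open>\<open>rot_vec i j c s f\<close> is \<open>g f\<close> for the rotation \<open>g\<close> of the \<open>(i,j)\<close>-plane with cosine \<open>c\<close> and
  sine \<open>s\<close>, and \<open>rot_tensor\<close> is \<open>(\<rho>(g)C)\<^sub>\<mu>\<^sub>a\<^sub>b = \<Sum> g\<^sub>\<mu>\<^sub>\<nu> g\<^sub>a\<^sub>k g\<^sub>b\<^sub>l C\<^sub>\<nu>\<^sub>k\<^sub>l\<close> (see \<open>rho_rot\<close>).\<close>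

definition rot_vec :: "nat \<Rightarrow> nat \<Rightarrow> real \<Rightarrow> real \<Rightarrow> (nat \<Rightarrow> real) \<Rightarrow> nat \<Rightarrow> real" where
  "rot_vec i j c s f x =
     (if x = i then c * f i - s * f j else if x = j then s * f i + c * f j else f x)"

definition rot_tensor :: "nat \<Rightarrow> nat \<Rightarrow> real \<Rightarrow> real \<Rightarrow> tup \<Rightarrow> tup" where
  "rot_tensor i j c s C \<mu> a b =
     rot_vec i j c s (\<lambda>\<nu>. rot_vec i j c s (\<lambda>l. rot_vec i j c s (\<lambda>k. C \<nu> k l) a) b) \<mu>"

lemma sum_rot_mult:
  assumes "i \<in> {1..n}" "j \<in> {1..n}" "i \<noteq> j" "x \<in> {1..n}"
  shows "(\<Sum>k=1..n. rot n i j \<theta> x k * f k) = rot_vec i j (cos \<theta>) (sin \<theta>) f x"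
proof -
  have "(\<Sum>k=1..n. rot n i j \<theta> x k * f k) =
        (\<Sum>k=1..n. (if k = i then (if x = i then cos \<theta> * f i else if x = j then sin \<theta> * f i else 0) else 0)
                 + (if k = j then (if x = i then - sin \<theta> * f j else if x = j then cos \<theta> * f j else 0) else 0)
                 + (if k = x \<and> x \<noteq> i \<and> x \<noteq> j then f x else 0))"
    by (rule sum.cong) (use assms in \<open>auto simp: rot_def\<close>)
  also have "\<dots> = rot_vec i j (cos \<theta>) (sin \<theta>) f x"
    using assms by (simp add: sum.distrib rot_vec_def)
  finally show ?thesis .
qed

lemma rho_rot:
  assumes "i \<in> {1..n}" "j \<in> {1..n}" "i \<noteq> j" "\<mu> \<in> {1..n}" "a \<in> {1..n}" "b \<in> {1..n}"
  shows "rho n (rot n i j \<theta>) C \<mu> a b = rot_tensor i j (cos \<theta>) (sin \<theta>) C \<mu> a b"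
proof -
  let ?R = "rot_vec i j (cos \<theta>) (sin \<theta>)"
  have conjugation: "mmul n (mmul n (rot n i j \<theta>) (C \<nu>)) (mtrans (rot n i j \<theta>)) a b
      = ?R (\<lambda>l. ?R (\<lambda>k. C \<nu> k l) a) b" for \<nu>
  proof -
    have "mmul n (mmul n (rot n i j \<theta>) (C \<nu>)) (mtrans (rot n i j \<theta>)) a b
       = (\<Sum>l=1..n. rot n i j \<theta> b l * (\<Sum>k=1..n. rot n i j \<theta> a k * C \<nu> k l))"
      unfolding mmul_def mtrans_def by (simp only: mult.commute[of "sum _ _"])
    also have "\<dots> = (\<Sum>l=1..n. rot n i j \<theta> b l * ?R (\<lambda>k. C \<nu> k l) a)"
      by (simp only: sum_rot_mult[OF assms(1-3,5)])
    also have "\<dots> = ?R (\<lambda>l. ?R (\<lambda>k. C \<nu> k l) a) b"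
      by (rule sum_rot_mult[OF assms(1-3,6)])
    finally show ?thesis .
  qed
  have "rho n (rot n i j \<theta>) C \<mu> a b = (\<Sum>\<nu>=1..n. rot n i j \<theta> \<mu> \<nu> * ?R (\<lambda>l. ?R (\<lambda>k. C \<nu> k l) a) b)"
    using assms(4) unfolding rho_def conjugation by (simp add: mtrans_def)
  also have "\<dots> = rot_tensor i j (cos \<theta>) (sin \<theta>) C \<mu> a b"
    unfolding rot_tensor_def by (rule sum_rot_mult[OF assms(1-4)])
  finally show ?thesis .
qed

lemma rot_outside: "a \<notin> {1..n} \<Longrightarrow> rot n i j \<theta> a k = 0"
  by (simp add: rot_def)

lemma rho_rot_outside:
  assumes "\<not> (\<mu> \<in> {1..n} \<and> a \<in> {1..n} \<and> b \<in> {1..n})"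
  shows "rho n (rot n i j \<theta>) C \<mu> a b = 0"
  using assms by (auto simp: rho_def mmul_def mtrans_def rot_outside)

lemma rot_vec_sum:
  "rot_vec i j c s (\<lambda>k. \<Sum>y\<in>F. w y * f y k) x = (\<Sum>y\<in>F. w y * rot_vec i j c s (f y) x)"
  by (simp add: rot_vec_def sum_distrib_left sum_subtractf[symmetric] sum.distrib[symmetric] algebra_simps)

lemma rot_tensor_sum:
  "rot_tensor i j c s (\<lambda>\<mu> a b. \<Sum>y\<in>F. w y * y \<mu> a b) \<mu> a b = (\<Sum>y\<in>F. w y * rot_tensor i j c s y \<mu> a b)"
  by (simp add: rot_tensor_def rot_vec_sum)

lemma rot_vec_diff: "rot_vec i j c s (\<lambda>k. f k - g k) x = rot_vec i j c s f x - rot_vec i j c s g x"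
  by (simp add: rot_vec_def algebra_simps)

lemma rot_vec_mult_left: "rot_vec i j c s (\<lambda>k. \<alpha> * f k) x = \<alpha> * rot_vec i j c s f x"
  by (simp add: rot_vec_def algebra_simps)

lemma rot_vec_mult_right: "rot_vec i j c s (\<lambda>k. f k * \<alpha>) x = rot_vec i j c s f x * \<alpha>"
  by (simp add: rot_vec_def algebra_simps)

lemma rot_vec_evec_fixed: "k \<noteq> i \<Longrightarrow> k \<noteq> j \<Longrightarrow> rot_vec i j c s (evec k) = evec k"
  by (simp add: fun_eq_iff rot_vec_def evec_def)

lemma rot_vec_orthogonal:
  assumes "i \<noteq> j" "c\<^sup>2 + s\<^sup>2 = 1"
  shows "rot_vec i j c s (\<lambda>\<nu>. rot_vec i j c s (evec \<nu>) a) \<mu> = evec \<mu> a"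
  using assms by (simp add: rot_vec_def evec_def power2_eq_square algebra_simps)

lemma rot_tensor_cong:
  assumes "i \<in> A" "j \<in> A" "\<mu> \<in> A" "\<And>\<nu>. \<nu> \<in> A \<Longrightarrow> C \<nu> = D \<nu>"
  shows "rot_tensor i j c s C \<mu> a b = rot_tensor i j c s D \<mu> a b"
  using assms by (simp add: rot_tensor_def rot_vec_def)

lemma rot_tensor_half_turn:
  assumes "i \<noteq> j"
  shows "rot_tensor i j (-1) 0 C \<mu> a b =
    (-1) ^ (count_list [\<mu>, a, b] i + count_list [\<mu>, a, b] j) * C \<mu> a b"
  using assms by (simp add: rot_tensor_def rot_vec_def)

section \<open>Antisymmetric tuples and their spans\<close>

lemma soTuples_iff:
  "C \<in> soTuples n \<longleftrightarrow> (\<forall>\<mu> a b. C \<mu> a b = - C \<mu> b a) \<and>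
     (\<forall>\<mu> a b. \<not> (\<mu> \<in> {1..n} \<and> a \<in> {1..n} \<and> b \<in> {1..n}) \<longrightarrow> C \<mu> a b = 0)"
    (is "_ \<longleftrightarrow> ?antisym \<and> ?support")
proof
  assume C: "C \<in> soTuples n"
  have so: "C \<mu> \<in> so n" if "\<mu> \<in> {1..n}" for \<mu>
    using C that unfolding soTuples_def by blast
  have zero: "C \<mu> a b = 0" if "\<mu> \<notin> {1..n}" for \<mu> a b
    using C that unfolding soTuples_def by auto
  have ?antisym
  proof (intro allI)
    fix \<mu> a b
    show "C \<mu> a b = - C \<mu> b a"
    proof (cases "\<mu> \<in> {1..n}")
      case True
      then show ?thesis using so unfolding so_def by blast
    qed (simp add: zero)
  qed
  moreover have ?support
    using so zero unfolding so_def by blast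
  ultimately show "?antisym \<and> ?support" ..
next
  assume H: "?antisym \<and> ?support"
  then have "C \<mu> = (\<lambda>_ _. 0)" if "\<mu> \<notin> {1..n}" for \<mu>
    using that by (intro ext) blast
  with H show "C \<in> soTuples n"
    unfolding soTuples_def so_def by blast
qed

lemma soTuples_outside:
  "C \<in> soTuples n \<Longrightarrow> \<not> (\<mu> \<in> {1..n} \<and> a \<in> {1..n} \<and> b \<in> {1..n}) \<Longrightarrow> C \<mu> a b = 0"
  using soTuples_iff by blast

lemma soTuples_antisym: "C \<in> soTuples n \<Longrightarrow> C \<mu> a b = - C \<mu> b a"
  using soTuples_iff by blast

lemma soTuples_diag: "C \<in> soTuples n \<Longrightarrow> C \<mu> a a = 0"
  using soTuples_antisym[of C n \<mu> a a] by simp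

lemma soTuples_eqI:
  assumes "C \<in> soTuples n" "D \<in> soTuples n"
    and "\<And>\<mu> a b. \<mu> \<in> {1..n} \<Longrightarrow> a \<in> {1..n} \<Longrightarrow> b \<in> {1..n} \<Longrightarrow> C \<mu> a b = D \<mu> a b"
  shows "C = D"
proof (intro ext)
  fix \<mu> a b
  show "C \<mu> a b = D \<mu> a b"
  proof (cases "\<mu> \<in> {1..n} \<and> a \<in> {1..n} \<and> b \<in> {1..n}")
    case False
    then show ?thesis using soTuples_outside assms(1,2) by metis
  qed (use assms(3) in blast)
qed

lemma soTuples_tadd: "C \<in> soTuples n \<Longrightarrow> D \<in> soTuples n \<Longrightarrow> C \<oplus> D \<in> soTuples n"
  unfolding soTuples_iff tadd_def by (metis add.inverse_distrib_swap add.commute add.right_neutral)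

lemma soTuples_tsub: "C \<in> soTuples n \<Longrightarrow> D \<in> soTuples n \<Longrightarrow> C \<ominus> D \<in> soTuples n"
  unfolding soTuples_iff tsub_def by (metis minus_diff_eq minus_diff_minus diff_zero)

lemma soTuples_sum:
  assumes "F \<subseteq> soTuples n"
  shows "(\<lambda>\<mu> a b. \<Sum>y\<in>F. w y * y \<mu> a b) \<in> soTuples n"
  unfolding soTuples_iff
proof (intro conjI allI impI)
  fix \<mu> a b
  have "(\<Sum>y\<in>F. w y * y \<mu> a b) = (\<Sum>y\<in>F. - (w y * y \<mu> b a))"
  proof (rule sum.cong)
    fix y assume "y \<in> F"
    then have "y \<mu> a b = - y \<mu> b a"
      using assms soTuples_antisym by blast
    then show "w y * y \<mu> a b = - (w y * y \<mu> b a)"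
      by simp
  qed (rule refl)
  then show "(\<Sum>y\<in>F. w y * y \<mu> a b) = - (\<Sum>y\<in>F. w y * y \<mu> b a)"
    by (simp add: sum_negf)
next
  fix \<mu> a b
  assume out: "\<not> (\<mu> \<in> {1..n} \<and> a \<in> {1..n} \<and> b \<in> {1..n})"
  have "y \<mu> a b = 0" if "y \<in> F" for y
    using assms that soTuples_outside[OF _ out] by blast
  then show "(\<Sum>y\<in>F. w y * y \<mu> a b) = 0"
    by (simp add: sum.neutral)
qed

lemma eA_antisym: "eA x y a b = - eA x y b a"
  by (simp add: eA_def)

lemma eA_outside: "x \<in> A \<Longrightarrow> y \<in> A \<Longrightarrow> a \<notin> A \<or> b \<notin> A \<Longrightarrow> eA x y a b = 0"
  by (auto simp: eA_def evec_def)

lemma eA_so: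
  assumes "x \<in> {1..n}" "y \<in> {1..n}"
  shows "eA x y \<in> so n"
  unfolding so_def mem_Collect_eq
  by (intro conjI allI impI eA_antisym eA_outside[OF assms])

lemma tens_evec_soTuples:
  assumes k: "k \<in> {1..n}" and M: "M \<in> so n"
  shows "tens (evec k) M \<in> soTuples n"
  unfolding soTuples_iff
proof (intro conjI allI impI)
  fix \<mu> a b
  have "M a b = - M b a"
    using M unfolding so_def by blast
  then show "tens (evec k) M \<mu> a b = - tens (evec k) M \<mu> b a"
    by (simp add: tens_def)
next
  fix \<mu> a b
  assume out: "\<not> (\<mu> \<in> {1..n} \<and> a \<in> {1..n} \<and> b \<in> {1..n})"
  show "tens (evec k) M \<mu> a b = 0"
  proof (cases "\<mu> \<in> {1..n}")
    case True
    then have "M a b = 0"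
      using M out unfolding so_def by blast
    then show ?thesis
      by (simp add: tens_def)
  next
    case False
    then have "evec k \<mu> = 0"
      using k by (auto simp: evec_def)
    then show ?thesis
      by (simp add: tens_def)
  qed
qed

lemma tspan_base: "X \<in> S \<Longrightarrow> X \<in> tspan S"
  unfolding tspan_def by (intro CollectI exI[of _ "{X}"] exI[of _ "\<lambda>_. 1"]) simp

lemma tspan_scale:
  assumes "X \<in> tspan S"
  shows "(\<lambda>\<mu> a b. t * X \<mu> a b) \<in> tspan S"
proof -
  obtain F w where "finite F" "F \<subseteq> S" "X = (\<lambda>\<mu> a b. \<Sum>y\<in>F. w y * y \<mu> a b)"
    using assms unfolding tspan_def by blast
  then show ?thesis
    unfolding tspan_def by (intro CollectI exI[of _ F] exI[of _ "\<lambda>y. t * w y"]) (simp add: sum_distrib_left mult.assoc)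
qed

lemma tspan_add:
  assumes "X \<in> tspan S" "Y \<in> tspan S"
  shows "(\<lambda>\<mu> a b. X \<mu> a b + Y \<mu> a b) \<in> tspan S"
proof -
  obtain F v where F: "finite F" "F \<subseteq> S" and X: "X = (\<lambda>\<mu> a b. \<Sum>y\<in>F. v y * y \<mu> a b)"
    using assms(1) unfolding tspan_def by blast
  obtain G w where G: "finite G" "G \<subseteq> S" and Y: "Y = (\<lambda>\<mu> a b. \<Sum>y\<in>G. w y * y \<mu> a b)"
    using assms(2) unfolding tspan_def by blast
  define u where "u y = (if y \<in> F then v y else 0) + (if y \<in> G then w y else 0)" for y
  have restrict: "(\<Sum>y\<in>F \<union> G. if y \<in> H then f y else 0) = sum f H"
    if "H \<subseteq> F \<union> G" for H and f :: "tup \<Rightarrow> real"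
    using F G that by (simp add: sum.inter_restrict[symmetric] Int_absorb1)
  have "(\<Sum>y\<in>F \<union> G. u y * y \<mu> a b) = (\<Sum>y\<in>F. v y * y \<mu> a b) + (\<Sum>y\<in>G. w y * y \<mu> a b)"
    for \<mu> a b
  proof -
    have "(\<Sum>y\<in>F \<union> G. u y * y \<mu> a b) =
        (\<Sum>y\<in>F \<union> G. (if y \<in> F then v y * y \<mu> a b else 0) + (if y \<in> G then w y * y \<mu> a b else 0))"
      by (intro sum.cong) (auto simp: u_def distrib_right)
    then show ?thesis
      by (simp add: sum.distrib restrict)
  qed
  then show ?thesis
    unfolding tspan_def X Y using F G by (intro CollectI exI[of _ "F \<union> G"] exI[of _ u]) auto
qed

lemma tspan_subset_soTuples: "S \<subseteq> soTuples n \<Longrightarrow> tspan S \<subseteq> soTuples n"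
  unfolding tspan_def using soTuples_sum by blast

lemma tspan_memI:
  assumes "C \<in> soTuples n" "S \<subseteq> soTuples n" "D \<in> tspan S"
    and "\<And>\<mu> a b. \<mu> \<in> {1..n} \<Longrightarrow> a \<in> {1..n} \<Longrightarrow> b \<in> {1..n} \<Longrightarrow> C \<mu> a b = D \<mu> a b"
  shows "C \<in> tspan S"
  using soTuples_eqI[OF assms(1) _ assms(4)] tspan_subset_soTuples[OF assms(2)] assms(3) by blast

section \<open>Entries of invariant tuples\<close>

text \<open>Rotations are parametrised by the point \<open>(c, s)\<close> of the unit circle rather than by the angle,
  so that the half and quarter turns are simply \<open>(-1, 0)\<close> and \<open>(0, 1)\<close>.\<close>

definition rot_invariant :: "nat \<Rightarrow> nat \<Rightarrow> nat \<Rightarrow> tup \<Rightarrow> bool" where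
  "rot_invariant n i j C \<longleftrightarrow> (\<forall>c s. c\<^sup>2 + s\<^sup>2 = 1 \<longrightarrow>
     (\<forall>\<mu>\<in>{1..n}. \<forall>a\<in>{1..n}. \<forall>b\<in>{1..n}. rot_tensor i j c s C \<mu> a b = C \<mu> a b))"

lemma rot_invariantI:
  assumes "\<And>c s. c * c + s * s = 1 \<Longrightarrow>
    \<forall>\<mu>\<in>{1..n}. \<forall>a\<in>{1..n}. \<forall>b\<in>{1..n}. rot_tensor i j c s C \<mu> a b = C \<mu> a b"
  shows "rot_invariant n i j C"
  using assms by (simp add: rot_invariant_def power2_eq_square)

lemma Eset_iff:
  assumes "i \<in> {1..n}" "j \<in> {1..n}" "i \<noteq> j"
  shows "C \<in> Eset n i j \<longleftrightarrow> C \<in> soTuples n \<and> rot_invariant n i j C"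
proof
  assume "C \<in> Eset n i j"
  then have so: "C \<in> soTuples n" and inv: "\<And>\<theta>. rho n (rot n i j \<theta>) C = C"
    by (auto simp: Eset_def)
  have "rot_tensor i j c s C \<mu> a b = C \<mu> a b"
    if unit: "c\<^sup>2 + s\<^sup>2 = 1" and range: "\<mu> \<in> {1..n}" "a \<in> {1..n}" "b \<in> {1..n}" for c s \<mu> a b
  proof -
    obtain \<theta> where "c = cos \<theta>" "s = sin \<theta>"
      using sincos_total_2pi[OF unit] by blast
    then show ?thesis
      using rho_rot[OF assms range, of \<theta> C] inv[of \<theta>] by simp
  qed
  with so show "C \<in> soTuples n \<and> rot_invariant n i j C"
    unfolding rot_invariant_def by blast
next
  assume H: "C \<in> soTuples n \<and> rot_invariant n i j C"
  have "rho n (rot n i j \<theta>) C \<mu> a b = C \<mu> a b" for \<theta> \<mu> a b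
  proof (cases "\<mu> \<in> {1..n} \<and> a \<in> {1..n} \<and> b \<in> {1..n}")
    case True
    then show ?thesis using H rho_rot[OF assms] unfolding rot_invariant_def by simp
  next
    case False
    then have "rho n (rot n i j \<theta>) C \<mu> a b = 0"
      by (rule rho_rot_outside)
    then show ?thesis using soTuples_outside[OF _ False] H by simp
  qed
  then have "rho n (rot n i j \<theta>) C = C" for \<theta>
    by (intro ext)
  with H show "C \<in> Eset n i j" by (simp add: Eset_def)
qed

lemma tspan_subset_Eset:
  assumes ij: "i \<in> {1..n}" "j \<in> {1..n}" "i \<noteq> j" and S: "S \<subseteq> Eset n i j"
  shows "tspan S \<subseteq> Eset n i j"
proof
  fix X assume "X \<in> tspan S"
  then obtain F w where F: "finite F" "F \<subseteq> S" and X: "X = (\<lambda>\<mu> a b. \<Sum>y\<in>F. w y * y \<mu> a b)"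
    unfolding tspan_def by blast
  have "S \<subseteq> soTuples n"
    using S by (auto simp: Eset_def)
  with F have "X \<in> soTuples n"
    unfolding X using soTuples_sum by blast
  moreover have "rot_tensor i j c s y \<mu> a b = y \<mu> a b"
    if "y \<in> F" "c\<^sup>2 + s\<^sup>2 = 1" "\<mu> \<in> {1..n}" "a \<in> {1..n}" "b \<in> {1..n}" for y c s \<mu> a b
  proof -
    have "y \<in> Eset n i j"
      using F S that(1) by blast
    then have "rot_invariant n i j y"
      unfolding Eset_iff[OF ij] by blast
    with that(2-) show ?thesis
      unfolding rot_invariant_def by blast
  qed
  ultimately show "X \<in> Eset n i j"
    unfolding Eset_iff[OF ij] rot_invariant_def X by (simp add: rot_tensor_sum)
qed

lemma tspan_subset_Eint:
  assumes "\<And>i j. 2 \<le> i \<Longrightarrow> i < j \<Longrightarrow> j \<le> n \<Longrightarrow> S \<subseteq> Eset n i j"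
  shows "tspan S \<subseteq> Eint n"
  unfolding Eint_def
proof (rule Inter_greatest)
  fix X assume "X \<in> {Eset n i j |i j. 2 \<le> i \<and> i < j \<and> j \<le> n}"
  then obtain i j where "X = Eset n i j" "2 \<le> i" "i < j" "j \<le> n"
    by blast
  then show "tspan S \<subseteq> X"
    using tspan_subset_Eset[of i n j S] assms by simp
qed

lemma Eint_Eset: "C \<in> Eint n \<Longrightarrow> 2 \<le> i \<Longrightarrow> i < j \<Longrightarrow> j \<le> n \<Longrightarrow> C \<in> Eset n i j"
  unfolding Eint_def by blast

lemma Eint_soTuples: "C \<in> Eint n \<Longrightarrow> 3 \<le> n \<Longrightarrow> C \<in> soTuples n"
  using Eint_Eset[of C n 2 3] by (simp add: Eset_def)

lemma Eint_rot_tensor: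
  assumes "C \<in> Eint n" "2 \<le> i" "i < j" "j \<le> n" "c\<^sup>2 + s\<^sup>2 = 1"
    and "\<mu> \<in> {1..n}" "a \<in> {1..n}" "b \<in> {1..n}"
  shows "rot_tensor i j c s C \<mu> a b = C \<mu> a b"
proof -
  have ij: "i \<in> {1..n}" "j \<in> {1..n}" "i \<noteq> j"
    using assms(2-4) by auto
  from Eint_Eset[OF assms(1-4)] have "rot_invariant n i j C"
    unfolding Eset_iff[OF ij] by blast
  with assms(5-) show ?thesis
    unfolding rot_invariant_def by blast
qed

lemma Eint_zero_of_odd_count:
  assumes C: "C \<in> Eint n" and pq: "p \<in> {2..n}" "q \<in> {2..n}" "p \<noteq> q"
    and range: "\<mu> \<in> {1..n}" "a \<in> {1..n}" "b \<in> {1..n}"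
    and odd: "odd (count_list [\<mu>, a, b] p + count_list [\<mu>, a, b] q)"
  shows "C \<mu> a b = 0"
proof -
  define i j where "i = min p q" and "j = max p q"
  have ij: "2 \<le> i" "i < j" "j \<le> n"
    using pq by (auto simp: i_def j_def)
  have "count_list [\<mu>, a, b] i + count_list [\<mu>, a, b] j = count_list [\<mu>, a, b] p + count_list [\<mu>, a, b] q"
    by (simp add: i_def j_def min_def max_def)
  with odd have "rot_tensor i j (-1) 0 C \<mu> a b = - C \<mu> a b"
    using rot_tensor_half_turn[of i j] ij by simp
  moreover have "rot_tensor i j (-1) 0 C \<mu> a b = C \<mu> a b"
    using Eint_rot_tensor[OF C ij _ range] by simp
  ultimately show ?thesis by simp
qed

lemma Eint_diag_eq:
  assumes C: "C \<in> Eint n" and m: "m \<in> {2..n}"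
  shows "C m m 1 = C 2 2 1"
proof (cases "m = 2")
  case False
  then have "rot_tensor 2 m 0 1 C m m 1 = C m m 1"
    using m by (intro Eint_rot_tensor[OF C]) auto
  then show ?thesis
    using False m by (simp add: rot_tensor_def rot_vec_def)
qed simp

section \<open>The invariant \<open>\<Sum>\<^sub>k e\<^sub>k \<otimes> e\<^sup>A\<^sub>k\<^sub>,\<^sub>1\<close>\<close>

definition eA1_tuple :: "nat \<Rightarrow> tup" where
  "eA1_tuple n = (\<lambda>\<mu> a b. \<Sum>k=1..n. tens (evec k) (eA k 1) \<mu> a b)"

lemma eA1_tuple_apply: "eA1_tuple n \<mu> a b = (if \<mu> \<in> {1..n} then eA \<mu> 1 a b else 0)"
proof -
  have "eA1_tuple n \<mu> a b = (\<Sum>k\<in>{1..n}. if k = \<mu> then eA k 1 a b else 0)"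
    unfolding eA1_tuple_def tens_def by (rule sum.cong) (simp_all add: evec_def)
  then show ?thesis
    by (simp add: sum.delta)
qed

lemma eA1_tuple_soTuples: "eA1_tuple n \<in> soTuples n"
  unfolding soTuples_iff
proof (intro conjI allI impI)
  fix \<mu> a b
  show "eA1_tuple n \<mu> a b = - eA1_tuple n \<mu> b a"
    using eA_antisym[of \<mu> 1 a b] by (simp add: eA1_tuple_apply)
next
  fix \<mu> a b
  assume out: "\<not> (\<mu> \<in> {1..n} \<and> a \<in> {1..n} \<and> b \<in> {1..n})"
  show "eA1_tuple n \<mu> a b = 0"
  proof (cases "\<mu> \<in> {1..n}")
    case True
    then have "eA \<mu> 1 a b = 0"
      using out by (intro eA_outside[where A = "{1..n}"]) auto
    with True show ?thesis
      by (simp add: eA1_tuple_apply)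
  qed (auto simp: eA1_tuple_apply)
qed

lemma rot_tensor_eA1_invariant:
  assumes "i \<noteq> 1" "j \<noteq> 1" "i \<noteq> j" "c\<^sup>2 + s\<^sup>2 = 1"
  shows "rot_tensor i j c s (\<lambda>\<nu>. eA \<nu> 1) \<mu> a b = eA \<mu> 1 a b"
  using assms
  by (simp only: rot_tensor_def eA_def rot_vec_diff rot_vec_mult_left rot_vec_mult_right
      rot_vec_evec_fixed rot_vec_orthogonal not_False_eq_True)

lemma eA1_tuple_Eset:
  assumes "2 \<le> i" "i < j" "j \<le> n"
  shows "eA1_tuple n \<in> Eset n i j"
proof -
  have ij: "i \<in> {1..n}" "j \<in> {1..n}" "i \<noteq> j"
    using assms by auto
  have "rot_tensor i j c s (eA1_tuple n) \<mu> a b = eA1_tuple n \<mu> a b"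
    if "c\<^sup>2 + s\<^sup>2 = 1" "\<mu> \<in> {1..n}" for c s \<mu> a b
  proof -
    have "rot_tensor i j c s (eA1_tuple n) \<mu> a b = rot_tensor i j c s (\<lambda>\<nu>. eA \<nu> 1) \<mu> a b"
      using ij that(2) by (intro rot_tensor_cong[where A = "{1..n}"]) (auto simp: eA1_tuple_apply fun_eq_iff)
    also have "\<dots> = eA \<mu> 1 a b"
      using assms that(1) by (intro rot_tensor_eA1_invariant) auto
    finally show ?thesis
      using that(2) by (simp add: eA1_tuple_apply)
  qed
  then show ?thesis
    unfolding Eset_iff[OF ij] rot_invariant_def using eA1_tuple_soTuples by blast
qed

lemma eA1_tuple_Eint: "eA1_tuple n \<in> Eint n"
  unfolding Eint_def using eA1_tuple_Eset by blast

lemma Eint_eq_eA1_tuple_of_free_index: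
  assumes C: "C \<in> Eint n" and n: "3 \<le> n"
    and range: "\<mu> \<in> {1..n}" "a \<in> {1..n}" "b \<in> {1..n}"
    and q: "q \<in> {2..n}" "q \<notin> {\<mu>, a, b}"
  shows "C \<mu> a b = C 2 2 1 * eA1_tuple n \<mu> a b"
proof -
  consider (diag) "a = b" | (pos) "2 \<le> \<mu>" "a = \<mu>" "b = 1" | (neg) "2 \<le> \<mu>" "a = 1" "b = \<mu>"
    | (single) p where "p \<in> {2..n}" "p \<noteq> q" "count_list [\<mu>, a, b] p = 1"
  proof (cases "a = b \<or> (2 \<le> \<mu> \<and> a = \<mu> \<and> b = 1) \<or> (2 \<le> \<mu> \<and> a = 1 \<and> b = \<mu>)")
    case True
    then show thesis
      using that(1-3) by blast
  next
    case False
    then have "\<exists>p\<in>{\<mu>, a, b}. 2 \<le> p \<and> count_list [\<mu>, a, b] p = 1"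
      using range by auto
    then obtain p where p: "p \<in> {\<mu>, a, b}" "2 \<le> p" "count_list [\<mu>, a, b] p = 1"
      by blast
    have "p \<in> {2..n}" "p \<noteq> q"
      using p(1,2) range q by auto
    with p(3) show thesis
      using that(4) by blast
  qed
  then show ?thesis
  proof cases
    case diag
    then show ?thesis
      using soTuples_diag[OF Eint_soTuples[OF C n]] soTuples_diag[OF eA1_tuple_soTuples] by simp
  next
    case pos
    then show ?thesis
      using Eint_diag_eq[OF C, of \<mu>] range by (simp add: eA1_tuple_apply eA_def evec_def)
  next
    case neg
    then have "C \<mu> a b = - C \<mu> \<mu> 1"
      using soTuples_antisym[OF Eint_soTuples[OF C n], of \<mu> a b] by simp
    then show ?thesis
      using neg Eint_diag_eq[OF C, of \<mu>] range by (simp add: eA1_tuple_apply eA_def evec_def)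
  next
    case single
    then have odd: "odd (count_list [\<mu>, a, b] p + count_list [\<mu>, a, b] q)"
      using q(2) by simp
    show ?thesis
      using Eint_zero_of_odd_count[OF C single(1) q(1) single(2) range odd]
        Eint_zero_of_odd_count[OF eA1_tuple_Eint single(1) q(1) single(2) range odd] by simp
  qed
qed

lemma Eint_eq_tspan_eA1_tuple:
  assumes n: "5 \<le> n"
  shows "Eint n = tspan {eA1_tuple n}"
proof
  show "tspan {eA1_tuple n} \<subseteq> Eint n"
    by (intro tspan_subset_Eint) (simp add: eA1_tuple_Eset)
next
  show "Eint n \<subseteq> tspan {eA1_tuple n}"
  proof
    fix C assume C: "C \<in> Eint n"
    show "C \<in> tspan {eA1_tuple n}"
    proof (rule tspan_memI)
      show "C \<in> soTuples n" "{eA1_tuple n} \<subseteq> soTuples n"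
        using Eint_soTuples[OF C] eA1_tuple_soTuples n by auto
      show "(\<lambda>\<mu> a b. C 2 2 1 * eA1_tuple n \<mu> a b) \<in> tspan {eA1_tuple n}"
        by (intro tspan_scale tspan_base) simp
    next
      fix \<mu> a b assume range: "\<mu> \<in> {1..n}" "a \<in> {1..n}" "b \<in> {1..n}"
      have "\<exists>q\<in>{2, 3, 4, 5}. q \<notin> {\<mu>, a, b}"
        by auto
      then obtain q where q: "q \<in> {2, 3, 4, 5}" "q \<notin> {\<mu>, a, b}"
        by blast
      have "3 \<le> n" "q \<in> {2..n}"
        using q(1) n by auto
      then show "C \<mu> a b = C 2 2 1 * eA1_tuple n \<mu> a b"
        using Eint_eq_eA1_tuple_of_free_index[OF C _ range _ q(2)] by blast
    qed
  qed
qed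

section \<open>Dimension 4\<close>

text \<open>The Levi-Civita symbol on the indices \<open>2, 3, 4\<close>, i.e. the volume form of \<open>e\<^sub>1\<^sup>\<bottom>\<close>.\<close>

definition vol4 :: tup where
  "vol4 = tens (evec 2) (eA 3 4) \<ominus> tens (evec 3) (eA 2 4) \<oplus> tens (evec 4) (eA 2 3)"

lemma eA1_tuple_4: "tens (evec 2) (eA 2 1) \<oplus> tens (evec 3) (eA 3 1) \<oplus> tens (evec 4) (eA 4 1) = eA1_tuple 4"
  by (auto simp: fun_eq_iff tadd_def tens_def evec_def eA1_tuple_apply eA_def)

lemma vol4_soTuples: "vol4 \<in> soTuples 4"
  unfolding vol4_def by (intro soTuples_tadd soTuples_tsub tens_evec_soTuples eA_so) auto

lemma vol4_rot_invariant:
  assumes "(i, j) \<in> {(2, 3), (2, 4), (3, 4)}"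
  shows "rot_invariant 4 i j vol4"
proof (rule rot_invariantI)
  fix c s :: real
  assume "c * c + s * s = 1"
  moreover have "{1..4} = {1, 2, 3, 4 :: nat}"
    by auto
  ultimately show "\<forall>\<mu>\<in>{1..4}. \<forall>a\<in>{1..4}. \<forall>b\<in>{1..4}. rot_tensor i j c s vol4 \<mu> a b = vol4 \<mu> a b"
    using assms by (elim insertE emptyE)
      (simp_all add: rot_tensor_def rot_vec_def vol4_def tadd_def tsub_def tens_def eA_def evec_def algebra_simps)
qed

lemma vol4_Eset:
  assumes "2 \<le> i" "i < j" "j \<le> 4"
  shows "vol4 \<in> Eset 4 i j"
proof -
  have "i \<in> {1..4}" "j \<in> {1..4}" "i \<noteq> j" "(i, j) \<in> {(2, 3), (2, 4), (3, 4)}"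
    using assms by auto
  then show ?thesis
    using Eset_iff vol4_soTuples vol4_rot_invariant by blast
qed

lemma Eint_4_eq_tspan: "Eint 4 = tspan {eA1_tuple 4, vol4}"
proof
  show "tspan {eA1_tuple 4, vol4} \<subseteq> Eint 4"
    by (intro tspan_subset_Eint) (simp add: eA1_tuple_Eset vol4_Eset)
next
  show "Eint 4 \<subseteq> tspan {eA1_tuple 4, vol4}"
  proof
    fix C assume C: "C \<in> Eint 4"
    define t1 t2 where "t1 = C 2 2 1" and "t2 = C 2 3 4"
    show "C \<in> tspan {eA1_tuple 4, vol4}"
    proof (rule tspan_memI)
      show "C \<in> soTuples 4" "{eA1_tuple 4, vol4} \<subseteq> soTuples 4"
        using Eint_soTuples[OF C] eA1_tuple_soTuples vol4_soTuples by auto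
      show "(\<lambda>\<mu> a b. t1 * eA1_tuple 4 \<mu> a b + t2 * vol4 \<mu> a b) \<in> tspan {eA1_tuple 4, vol4}"
        by (intro tspan_add tspan_scale tspan_base) simp_all
    next
      have so: "C \<in> soTuples 4"
        using Eint_soTuples[OF C] by simp
      have free_index: "C \<mu> a b = t1 * eA1_tuple 4 \<mu> a b"
        if "\<mu> \<in> {1..4}" "a \<in> {1..4}" "b \<in> {1..4}" "q \<in> {2..4}" "q \<notin> {\<mu>, a, b}" for \<mu> a b q
        unfolding t1_def using Eint_eq_eA1_tuple_of_free_index[OF C _ that] by simp
      have "C 2 3 4 = t2" "C 2 4 3 = - t2"
        using soTuples_antisym[OF so, of 2 4 3] by (simp_all add: t2_def)
      moreover have "C 3 2 4 = - C 2 3 4"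
        using Eint_rot_tensor[OF C, of 2 3 0 1 3 2 4] by (simp add: rot_tensor_def rot_vec_def)
      moreover have "C 4 2 3 = - C 2 4 3"
        using Eint_rot_tensor[OF C, of 2 4 0 1 4 2 3] by (simp add: rot_tensor_def rot_vec_def)
      ultimately have cross: "C 2 3 4 = t2" "C 2 4 3 = - t2" "C 3 2 4 = - t2" "C 3 4 2 = t2"
          "C 4 2 3 = t2" "C 4 3 2 = - t2"
        using soTuples_antisym[OF so, of 3 4 2] soTuples_antisym[OF so, of 4 3 2] by simp_all
      have "{1..4} = {1, 2, 3, 4 :: nat}"
        by auto
      then have "\<forall>\<mu>\<in>{1..4}. \<forall>a\<in>{1..4}. \<forall>b\<in>{1..4}. C \<mu> a b = t1 * eA1_tuple 4 \<mu> a b + t2 * vol4 \<mu> a b"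
        using free_index[of _ _ _ 2] free_index[of _ _ _ 3] free_index[of _ _ _ 4]
        by (simp add: cross eA1_tuple_apply vol4_def tadd_def tsub_def tens_def eA_def evec_def)
      then show "C \<mu> a b = t1 * eA1_tuple 4 \<mu> a b + t2 * vol4 \<mu> a b"
        if "\<mu> \<in> {1..4}" "a \<in> {1..4}" "b \<in> {1..4}" for \<mu> a b
        using that by blast
    qed
  qed
qed

section \<open>Dimension 3\<close>

text \<open>\<open>\<Sum>\<^sub>k R e\<^sub>k \<otimes> e\<^sup>A\<^sub>k\<^sub>,\<^sub>1\<close> for a quarter turn \<open>R\<close> of the \<open>(2,3)\<close>-plane; it is invariant because
  \<open>R\<close> commutes with the rotations of that plane.\<close>

definition twist3 :: tup where
  "twist3 = tens (evec 2) (eA 3 1) \<ominus> tens (evec 3) (eA 2 1)"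

definition vol3 :: tup where
  "vol3 = tens (evec 1) (eA 2 3)"

lemma eA1_tuple_3: "tens (evec 2) (eA 2 1) \<oplus> tens (evec 3) (eA 3 1) = eA1_tuple 3"
  by (auto simp: fun_eq_iff tadd_def tens_def evec_def eA1_tuple_apply eA_def)

lemma twist3_soTuples: "twist3 \<in> soTuples 3"
  unfolding twist3_def by (intro soTuples_tsub tens_evec_soTuples eA_so) auto

lemma vol3_soTuples: "vol3 \<in> soTuples 3"
  unfolding vol3_def by (intro tens_evec_soTuples eA_so) auto

lemma twist3_Eset: "twist3 \<in> Eset 3 2 3"
proof -
  have "{1..3} = {1, 2, 3 :: nat}"
    by auto
  then have "rot_invariant 3 2 3 twist3"
    by (intro rot_invariantI)
      (simp add: rot_tensor_def rot_vec_def twist3_def tsub_def tens_def eA_def evec_def algebra_simps)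
  then show ?thesis
    using Eset_iff[of 2 3 3] twist3_soTuples by simp
qed

lemma vol3_Eset: "vol3 \<in> Eset 3 2 3"
proof -
  have "{1..3} = {1, 2, 3 :: nat}"
    by auto
  then have "rot_invariant 3 2 3 vol3"
    by (intro rot_invariantI)
      (simp add: rot_tensor_def rot_vec_def vol3_def tens_def eA_def evec_def algebra_simps)
  then show ?thesis
    using Eset_iff[of 2 3 3] vol3_soTuples by simp
qed

lemma Eint_3_eq_Eset: "Eint 3 = Eset 3 2 3"
proof -
  have "2 \<le> i \<and> i < j \<and> j \<le> (3::nat) \<longleftrightarrow> i = 2 \<and> j = 3" for i j
    by auto
  then show ?thesis
    by (simp add: Eint_def)
qed

lemma Eset_3_2_3_eq_tspan: "Eset 3 2 3 = tspan {eA1_tuple 3, twist3, vol3}"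
proof
  show "tspan {eA1_tuple 3, twist3, vol3} \<subseteq> Eset 3 2 3"
    by (intro tspan_subset_Eset) (auto simp: eA1_tuple_Eset twist3_Eset vol3_Eset)
next
  show "Eset 3 2 3 \<subseteq> tspan {eA1_tuple 3, twist3, vol3}"
  proof
    fix C assume "C \<in> Eset 3 2 3"
    then have C: "C \<in> Eint 3"
      by (simp add: Eint_3_eq_Eset)
    define t1 t2 t3 where "t1 = C 2 2 1" and "t2 = C 2 3 1" and "t3 = C 1 2 3"
    show "C \<in> tspan {eA1_tuple 3, twist3, vol3}"
    proof (rule tspan_memI)
      show "C \<in> soTuples 3" "{eA1_tuple 3, twist3, vol3} \<subseteq> soTuples 3"
        using Eint_soTuples[OF C] eA1_tuple_soTuples twist3_soTuples vol3_soTuples by auto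
      show "(\<lambda>\<mu> a b. t1 * eA1_tuple 3 \<mu> a b + t2 * twist3 \<mu> a b + t3 * vol3 \<mu> a b)
          \<in> tspan {eA1_tuple 3, twist3, vol3}"
        by (intro tspan_add tspan_scale tspan_base) simp_all
    next
      have so: "C \<in> soTuples 3"
        using Eint_soTuples[OF C] by simp
      have free_index: "C \<mu> a b = t1 * eA1_tuple 3 \<mu> a b"
        if "\<mu> \<in> {1..3}" "a \<in> {1..3}" "b \<in> {1..3}" "q \<in> {2..3}" "q \<notin> {\<mu>, a, b}" for \<mu> a b q
        unfolding t1_def using Eint_eq_eA1_tuple_of_free_index[OF C _ that] by simp
      have parity: "C \<mu> a b = 0"
        if "\<mu> \<in> {1..3}" "a \<in> {1..3}" "b \<in> {1..3}"
          "odd (count_list [\<mu>, a, b] 2 + count_list [\<mu>, a, b] 3)" for \<mu> a b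
        using Eint_zero_of_odd_count[OF C _ _ _ that] by simp
      have "C 3 2 1 = - C 2 3 1"
        using Eint_rot_tensor[OF C, of 2 3 0 1 3 2 1] by (simp add: rot_tensor_def rot_vec_def)
      then have cross: "C 2 3 1 = t2" "C 3 2 1 = - t2" "C 2 1 3 = - t2" "C 3 1 2 = t2"
          "C 1 2 3 = t3" "C 1 3 2 = - t3"
        using soTuples_antisym[OF so, of 2 1 3] soTuples_antisym[OF so, of 3 1 2]
          soTuples_antisym[OF so, of 1 3 2] by (simp_all add: t2_def t3_def)
      have "{1..3} = {1, 2, 3 :: nat}"
        by auto
      then have "\<forall>\<mu>\<in>{1..3}. \<forall>a\<in>{1..3}. \<forall>b\<in>{1..3}.
          C \<mu> a b = t1 * eA1_tuple 3 \<mu> a b + t2 * twist3 \<mu> a b + t3 * vol3 \<mu> a b"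
        using free_index[of _ _ _ 2] free_index[of _ _ _ 3] parity
        by (simp add: cross[unfolded One_nat_def] eA1_tuple_apply twist3_def vol3_def tsub_def tens_def eA_def evec_def)
      then show "C \<mu> a b = t1 * eA1_tuple 3 \<mu> a b + t2 * twist3 \<mu> a b + t3 * vol3 \<mu> a b"
        if "\<mu> \<in> {1..3}" "a \<in> {1..3}" "b \<in> {1..3}" for \<mu> a b
        using that by blast
    qed
  qed
qed

theorem mainTheorem1:
  shows "(Eint 3 = Eset 3 2 3 \<and>
          Eset 3 2 3 = tspan {tens (evec 2) (eA 2 1) \<oplus> tens (evec 3) (eA 3 1),
                              tens (evec 2) (eA 3 1) \<ominus> tens (evec 3) (eA 2 1),
                              tens (evec 1) (eA 2 3)})
       \<and> Eint 4 = tspan {tens (evec 2) (eA 2 1) \<oplus> tens (evec 3) (eA 3 1) \<oplus> tens (evec 4) (eA 4 1),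
                         tens (evec 2) (eA 3 4) \<ominus> tens (evec 3) (eA 2 4) \<oplus> tens (evec 4) (eA 2 3)}
       \<and> (\<forall>n::nat. n \<ge> 5 \<longrightarrow>
            Eint n = tspan {(\<lambda>\<mu> a b. \<Sum>k=1..n. tens (evec k) (eA k 1) \<mu> a b)})"
  using Eint_3_eq_Eset Eset_3_2_3_eq_tspan Eint_4_eq_tspan Eint_eq_tspan_eA1_tuple
  unfolding eA1_tuple_4 unfolding eA1_tuple_3 twist3_def[symmetric] vol3_def[symmetric] vol4_def[symmetric]
    eA1_tuple_def[symmetric]
  by blast

end
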